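(* Let $p$ be a prime and $k$ a field of characteristic $p$. Then $R_1^{(p)}\neq L_1$.
   Context: $X=\{x_1,x_2,\ldots\}$ is a countably infinite set and $k_0\langle X\rangle$ is the free associative $k$-algebra (without identity) on $X$. A $T$-space is a $k$-linear subspace closed under every algebra endomorphism of $k_0\langle X\rangle$; the $T$-space generated by a subset is the smallest $T$-space containing it. $S_p(v_1,\ldots,v_p)=\sum_{\sigma\in\Sigma_p}\prod_{i=1}^p v_{\sigma(i)}$; $R_1^{(p)}$ is the $T$-space generated by $S_p(x_1,\ldots,x_p)$, and $L_1$ is the $T$-space generated by $x_1^p$. *)

theory Defs
  imports Main "HOL-Computational_Algebra.Primes" "HOL-Library.Function_Algebras" "HOL-Combinatorics.Permutations"
begin

text \<open>The free associative k-algebra without identity k_0<X> on X = {x_0, x_1, ...}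
  (variables indexed by nat, x_i is the one-letter word [i]).\<close>

definition FA :: "(nat list \<Rightarrow> 'k::field) set" where
  "FA = {f. finite {w. f w \<noteq> 0} \<and> f [] = 0}"

definition fa_mul :: "(nat list \<Rightarrow> 'k::field) \<Rightarrow> (nat list \<Rightarrow> 'k) \<Rightarrow> (nat list \<Rightarrow> 'k)" where
  "fa_mul f g = (\<lambda>w. \<Sum>i\<le>length w. f (take i w) * g (drop i w))"

definition fa_smult :: "'k::field \<Rightarrow> (nat list \<Rightarrow> 'k) \<Rightarrow> (nat list \<Rightarrow> 'k)" where
  "fa_smult c f = (\<lambda>w. c * f w)"

definition fa_var :: "nat \<Rightarrow> (nat list \<Rightarrow> 'k::field)" where
  "fa_var i = (\<lambda>w. if w = [i] then 1 else 0)"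

fun fa_prod :: "(nat list \<Rightarrow> 'k::field) list \<Rightarrow> (nat list \<Rightarrow> 'k)" where
  "fa_prod [] = 0"
| "fa_prod [f] = f"
| "fa_prod (f # g # fs) = fa_mul f (fa_prod (g # fs))"

definition fa_endo :: "((nat list \<Rightarrow> 'k::field) \<Rightarrow> (nat list \<Rightarrow> 'k)) \<Rightarrow> bool" where
  "fa_endo \<phi> \<longleftrightarrow>
     (\<forall>f\<in>FA. \<phi> f \<in> FA) \<and>
     (\<forall>f\<in>FA. \<forall>g\<in>FA. \<phi> (f + g) = \<phi> f + \<phi> g) \<and>
     (\<forall>c. \<forall>f\<in>FA. \<phi> (fa_smult c f) = fa_smult c (\<phi> f)) \<and>
     (\<forall>f\<in>FA. \<forall>g\<in>FA. \<phi> (fa_mul f g) = fa_mul (\<phi> f) (\<phi> g))"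

definition fa_subspace :: "(nat list \<Rightarrow> 'k::field) set \<Rightarrow> bool" where
  "fa_subspace V \<longleftrightarrow> V \<subseteq> FA \<and> 0 \<in> V \<and>
     (\<forall>f\<in>V. \<forall>g\<in>V. f + g \<in> V) \<and> (\<forall>c. \<forall>f\<in>V. fa_smult c f \<in> V)"

definition T_space :: "(nat list \<Rightarrow> 'k::field) set \<Rightarrow> bool" where
  "T_space V \<longleftrightarrow> fa_subspace V \<and> (\<forall>\<phi>. fa_endo \<phi> \<longrightarrow> (\<forall>f\<in>V. \<phi> f \<in> V))"

definition T_gen :: "(nat list \<Rightarrow> 'k::field) set \<Rightarrow> (nat list \<Rightarrow> 'k) set" where
  "T_gen S = \<Inter>{V. T_space V \<and> S \<subseteq> V}"

text \<open>S_p(v_1,...,v_p) = sum over permutations of products (indices shifted to 0..p-1).\<close>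
definition S_poly :: "nat \<Rightarrow> (nat \<Rightarrow> (nat list \<Rightarrow> 'k::field)) \<Rightarrow> (nat list \<Rightarrow> 'k)" where
  "S_poly p v = (\<Sum>\<sigma>\<in>{\<sigma>. \<sigma> permutes {0..<p}}. fa_prod (map (\<lambda>i. v (\<sigma> i)) [0..<p]))"

definition R1 :: "nat \<Rightarrow> (nat list \<Rightarrow> 'k::field) set" where
  "R1 p = T_gen {S_poly p fa_var}"

definition L1 :: "nat \<Rightarrow> (nat list \<Rightarrow> 'k::field) set" where
  "L1 p = T_gen {fa_prod (replicate p (fa_var 0))}"

end

theory Submission
  imports Defs
begin

text \<open>For a word \<open>w\<close>, the elements all of whose endomorphic images have coefficient 0 at \<open>w\<close>
  form a T-space. Take \<open>w = x\<^sub>0\<^sup>p\<close>: the coefficient of \<open>x\<^sub>0\<^sup>p\<close> in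
  \<open>S\<^sub>p(u\<^sub>1,\<dots>,u\<^sub>p)\<close> is \<open>p!\<close> times the product of the coefficients of \<open>x\<^sub>0\<close> in the
  \<open>u\<^sub>i\<close>, which vanishes in characteristic \<open>p\<close>. So this T-space contains \<open>R\<^sub>1\<^sup>(\<^sup>p\<^sup>)\<close>,
  but not \<open>x\<^sub>0\<^sup>p \<in> L\<^sub>1\<close>.\<close>

lemma zero_in_FA: "(0 :: nat list \<Rightarrow> 'k::field) \<in> FA"
  by (simp add: FA_def)

lemma add_in_FA:
  assumes "f \<in> FA" and "g \<in> FA"
  shows "f + g \<in> FA"
proof -
  have "{w. (f + g) w \<noteq> 0} \<subseteq> {w. f w \<noteq> 0} \<union> {w. g w \<noteq> 0}" by auto
  with assms show ?thesis by (auto simp: FA_def intro: finite_subset)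
qed

lemma fa_smult_in_FA:
  assumes "f \<in> FA"
  shows "fa_smult c f \<in> FA"
proof -
  have "{w. fa_smult c f w \<noteq> 0} \<subseteq> {w. f w \<noteq> 0}" by (auto simp: fa_smult_def)
  with assms show ?thesis by (auto simp: FA_def fa_smult_def intro: finite_subset)
qed

lemma fa_mul_in_FA:
  assumes f: "f \<in> FA" and g: "g \<in> FA"
  shows "fa_mul f g \<in> FA"
proof -
  let ?Sf = "{w. f w \<noteq> 0}" and ?Sg = "{w. g w \<noteq> 0}"
  have "{w. fa_mul f g w \<noteq> 0} \<subseteq> (\<lambda>(a, b). a @ b) ` (?Sf \<times> ?Sg)"
  proof
    fix w assume "w \<in> {w. fa_mul f g w \<noteq> 0}"
    then have "(\<Sum>i\<le>length w. f (take i w) * g (drop i w)) \<noteq> 0"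
      by (simp add: fa_mul_def)
    then obtain i where "f (take i w) * g (drop i w) \<noteq> 0"
      by (meson sum.neutral)
    then have "(take i w, drop i w) \<in> ?Sf \<times> ?Sg" by auto
    then show "w \<in> (\<lambda>(a, b). a @ b) ` (?Sf \<times> ?Sg)"
      by (metis (no_types, lifting) append_take_drop_id case_prod_conv image_eqI)
  qed
  moreover have "finite ((\<lambda>(a, b). a @ b) ` (?Sf \<times> ?Sg))"
    using f g by (auto simp: FA_def)
  ultimately have "finite {w. fa_mul f g w \<noteq> 0}" by (rule finite_subset)
  moreover have "fa_mul f g [] = 0" using f by (simp add: fa_mul_def FA_def)
  ultimately show ?thesis by (simp add: FA_def)
qed

lemma fa_var_in_FA: "(fa_var i :: nat list \<Rightarrow> 'k::field) \<in> FA"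
proof -
  have "{w. (fa_var i :: nat list \<Rightarrow> 'k) w \<noteq> 0} \<subseteq> {[i]}" by (auto simp: fa_var_def)
  then show ?thesis by (auto simp: FA_def fa_var_def intro: finite_subset)
qed

lemma fa_prod_in_FA: "\<forall>u\<in>set us. u \<in> FA \<Longrightarrow> fa_prod us \<in> FA"
  by (induction us rule: fa_prod.induct) (auto simp: zero_in_FA fa_mul_in_FA)

lemma sum_in_FA: "\<forall>a\<in>A. F a \<in> FA \<Longrightarrow> (\<Sum>a\<in>A. F a) \<in> FA"
  by (induction A rule: infinite_finite_induct) (auto simp: zero_in_FA add_in_FA)

lemma sum_fun_apply: "(\<Sum>a\<in>A. F a) w = (\<Sum>a\<in>A. F a w)"
  by (induction A rule: infinite_finite_induct) auto

lemma fa_endo_in_FA: "fa_endo \<phi> \<Longrightarrow> f \<in> FA \<Longrightarrow> \<phi> f \<in> FA"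
  unfolding fa_endo_def by blast

lemma fa_endo_add: "fa_endo \<phi> \<Longrightarrow> f \<in> FA \<Longrightarrow> g \<in> FA \<Longrightarrow> \<phi> (f + g) = \<phi> f + \<phi> g"
  unfolding fa_endo_def by blast

lemma fa_endo_smult: "fa_endo \<phi> \<Longrightarrow> f \<in> FA \<Longrightarrow> \<phi> (fa_smult c f) = fa_smult c (\<phi> f)"
  unfolding fa_endo_def by blast

lemma fa_endo_zero: "fa_endo \<phi> \<Longrightarrow> \<phi> 0 = 0"
  using fa_endo_add[OF _ zero_in_FA zero_in_FA] by fastforce

lemma fa_endo_id: "fa_endo id"
  unfolding fa_endo_def by simp

lemma fa_endo_comp: "fa_endo \<phi> \<Longrightarrow> fa_endo \<psi> \<Longrightarrow> fa_endo (\<phi> \<circ> \<psi>)"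
  unfolding fa_endo_def comp_def by (simp add: add_in_FA fa_smult_in_FA fa_mul_in_FA)

lemma fa_endo_sum:
  assumes "fa_endo \<phi>" and "\<forall>a\<in>A. F a \<in> FA"
  shows "\<phi> (\<Sum>a\<in>A. F a) = (\<Sum>a\<in>A. \<phi> (F a))"
  using assms(2)
proof (induction A rule: infinite_finite_induct)
  case (insert x A)
  have F: "F x \<in> FA" "\<forall>a\<in>A. F a \<in> FA" using insert.prems by auto
  have "\<phi> (sum F (insert x A)) = \<phi> (F x + sum F A)"
    by (simp only: sum.insert[OF insert.hyps])
  also have "\<dots> = \<phi> (F x) + \<phi> (sum F A)"
    using fa_endo_add[OF assms(1) F(1) sum_in_FA[OF F(2)]] .
  also have "\<dots> = (\<Sum>a\<in>insert x A. \<phi> (F a))"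
    using insert.IH[OF F(2)] by (simp only: sum.insert[OF insert.hyps])
  finally show ?case .
qed (simp_all add: fa_endo_zero[OF assms(1)])

lemma fa_endo_fa_prod:
  assumes "fa_endo \<phi>" and "\<forall>u\<in>set us. u \<in> FA"
  shows "\<phi> (fa_prod us) = fa_prod (map \<phi> us)"
  using assms(2)
proof (induction us rule: fa_prod.induct)
  case (3 f g fs)
  then show ?case
    using assms(1) fa_prod_in_FA[of "g # fs"] by (simp add: fa_endo_def)
qed (simp_all add: fa_endo_zero[OF assms(1)])

lemma fa_endo_S_poly:
  assumes "fa_endo \<phi>" and "\<And>i. v i \<in> FA"
  shows "\<phi> (S_poly p v) = S_poly p (\<lambda>i. \<phi> (v i))"
  unfolding S_poly_def
  using assms by (simp add: fa_endo_sum fa_endo_fa_prod fa_prod_in_FA comp_def)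

text \<open>Each factor of a product of elements without constant term contributes at least one
  letter.\<close>

lemma fa_prod_short_word:
  "\<forall>u\<in>set us. u [] = 0 \<Longrightarrow> length w < length us \<Longrightarrow> fa_prod us w = 0"
proof (induction us arbitrary: w rule: fa_prod.induct)
  case (3 f g fs)
  have "f (take i w) * fa_prod (g # fs) (drop i w) = 0" for i
    using 3 by (cases "i = 0") simp_all
  then show ?case by (simp only: fa_prod.simps fa_mul_def sum.neutral_const)
qed simp_all

lemma fa_prod_replicate_word:
  assumes "\<forall>u\<in>set us. u [] = 0" and "us \<noteq> []"
  shows "fa_prod us (replicate (length us) a) = (\<Prod>u\<leftarrow>us. u [a])"
  using assms
proof (induction us rule: fa_prod.induct)
  case (3 f g fs)
  define w where "w = replicate (length (f # g # fs)) a"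
  define T where "T i = f (take i w) * fa_prod (g # fs) (drop i w)" for i
  have "fa_prod (f # g # fs) w = (\<Sum>i\<le>Suc (Suc (length fs)). T i)"
    by (simp add: fa_mul_def T_def w_def)
  also have "\<dots> = T 0 + (T 1 + (\<Sum>i\<le>length fs. T (Suc (Suc i))))"
    by (simp only: sum.atMost_Suc_shift One_nat_def)
  also have "\<dots> = T 1"
  proof -
    have "T 0 = 0" using 3(2) by (simp add: T_def)
    moreover have "T (Suc (Suc i)) = 0" for i
      using 3(2) fa_prod_short_word[of "g # fs"] by (simp add: T_def w_def)
    ultimately show ?thesis by simp
  qed
  also have "\<dots> = (\<Prod>u\<leftarrow>f # g # fs. u [a])"
    using 3 by (simp add: T_def w_def)
  finally show ?case by (simp only: w_def)
qed simp_all

lemma S_poly_replicate_word: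
  assumes "\<And>i. u i [] = 0" and "p \<noteq> 0"
  shows "S_poly p u (replicate p a) = of_nat (fact p) * (\<Prod>i<p. u i [a])"
proof -
  let ?P = "{\<sigma>. \<sigma> permutes {..<p}}"
  have "fa_prod (map (\<lambda>i. u (\<sigma> i)) [0..<p]) (replicate p a) = (\<Prod>i<p. u i [a])"
    if "\<sigma> permutes {..<p}" for \<sigma>
  proof -
    have "fa_prod (map (\<lambda>i. u (\<sigma> i)) [0..<p]) (replicate p a) = (\<Prod>i<p. u (\<sigma> i) [a])"
      using fa_prod_replicate_word[of "map (\<lambda>i. u (\<sigma> i)) [0..<p]" a] assms
      by (simp add: prod.distinct_set_conv_list[symmetric] atLeast0LessThan)
    also have "\<dots> = (\<Prod>i<p. u i [a])"
      using prod.permute[OF that, of "\<lambda>i. u i [a]"] by (simp add: comp_def)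
    finally show ?thesis .
  qed
  then have "S_poly p u (replicate p a) = (\<Sum>\<sigma>\<in>?P. \<Prod>i<p. u i [a])"
    by (simp add: S_poly_def sum_fun_apply atLeast0LessThan)
  also have "\<dots> = of_nat (fact p) * (\<Prod>i<p. u i [a])"
    using card_permutations[of "{..<p}" p] by simp
  finally show ?thesis .
qed

definition coeff_T_kernel :: "nat list \<Rightarrow> (nat list \<Rightarrow> 'k::field) set" where
  "coeff_T_kernel w = {f \<in> FA. \<forall>\<phi>. fa_endo \<phi> \<longrightarrow> \<phi> f w = 0}"

lemma T_space_coeff_T_kernel: "T_space (coeff_T_kernel w)"
proof -
  have "fa_smult c f \<in> coeff_T_kernel w" if "f \<in> coeff_T_kernel w" for c f
    using that by (auto simp: coeff_T_kernel_def fa_smult_in_FA fa_endo_smult)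
      (simp add: fa_smult_def)
  then show ?thesis
    unfolding T_space_def fa_subspace_def coeff_T_kernel_def
    by (auto simp: zero_in_FA add_in_FA fa_endo_in_FA fa_endo_zero fa_endo_add
        dest: fa_endo_comp[unfolded comp_def])
qed

lemma T_gen_least: "T_space V \<Longrightarrow> S \<subseteq> V \<Longrightarrow> T_gen S \<subseteq> V"
  unfolding T_gen_def by blast

lemma T_gen_superset: "S \<subseteq> T_gen S"
  unfolding T_gen_def by blast

lemma S_poly_in_coeff_T_kernel:
  assumes "CHAR('k::field) = p" and "p \<noteq> 0"
  shows "(S_poly p fa_var :: nat list \<Rightarrow> 'k) \<in> coeff_T_kernel (replicate p a)"
proof -
  have "(S_poly p fa_var :: nat list \<Rightarrow> 'k) \<in> FA"
    by (auto simp: S_poly_def intro!: sum_in_FA fa_prod_in_FA fa_var_in_FA)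
  moreover have "\<phi> (S_poly p fa_var :: nat list \<Rightarrow> 'k) (replicate p a) = 0"
    if "fa_endo \<phi>" for \<phi>
  proof -
    have "\<phi> (fa_var i) [] = 0" for i
      using fa_endo_in_FA[OF that fa_var_in_FA] by (simp add: FA_def)
    moreover have "(of_nat (fact p) :: 'k) = 0"
      using assms by (simp add: of_nat_eq_0_iff_char_dvd dvd_fact)
    ultimately show ?thesis
      using assms(2) by (simp add: fa_endo_S_poly[OF that fa_var_in_FA] S_poly_replicate_word)
  qed
  ultimately show ?thesis by (simp add: coeff_T_kernel_def)
qed

lemma fa_var_power_replicate_word:
  assumes "n \<noteq> 0"
  shows "(fa_prod (replicate n (fa_var a)) :: nat list \<Rightarrow> 'k::field) (replicate n a) = 1"
  using fa_prod_replicate_word[of "replicate n (fa_var a) :: (nat list \<Rightarrow> 'k) list" a] assms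
  by (simp add: fa_var_def)

theorem proposition5p1:
  fixes p :: nat
  assumes "prime p" and "CHAR('k::field) = p"
  shows "(R1 p :: (nat list \<Rightarrow> 'k) set) \<noteq> L1 p"
proof
  assume eq: "(R1 p :: (nat list \<Rightarrow> 'k) set) = L1 p"
  have "p \<noteq> 0" using assms(1) by auto
  let ?K = "coeff_T_kernel (replicate p 0) :: (nat list \<Rightarrow> 'k) set"
  let ?x0p = "fa_prod (replicate p (fa_var 0)) :: nat list \<Rightarrow> 'k"
  have "R1 p \<subseteq> ?K"
    unfolding R1_def
    using T_gen_least[OF T_space_coeff_T_kernel] S_poly_in_coeff_T_kernel[OF assms(2) \<open>p \<noteq> 0\<close>]
    by blast
  moreover have "?x0p \<in> L1 p"
    unfolding L1_def using T_gen_superset by blast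
  ultimately have "?x0p \<in> ?K" using eq by blast
  then have "id ?x0p (replicate p 0) = 0"
    using fa_endo_id unfolding coeff_T_kernel_def by blast
  then show False
    using fa_var_power_replicate_word[OF \<open>p \<noteq> 0\<close>, of 0, where 'k = 'k] by simp
qed

end
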